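(* Let $\Lambda$ be an ordered abelian group and $(X,d)$ a geodesic $\Lambda$-metric space such that $(x\cdot y)_z\in\Lambda$ for all $x,y,z\in X$. For $\delta\in\Lambda$, $\delta\geqslant 0$, consider the properties: (H1,$\delta$): $(X,d)$ is $\delta$-hyperbolic; (H2,$\delta$): every geodesic triangle in $X$ is $\delta$-thin; (H3,$\delta$): for every geodesic triangle with sides $[x,y],[y,z],[x,z]$ and every $u\in[x,y]$ there exists $w\in[x,z]\cup[y,z]$ with $d(u,w)\leqslant\delta$. Then (H1,$\delta$)$\Rightarrow$(H2,$4\delta$), (H2,$\delta$)$\Rightarrow$(H1,$2\delta$), (H2,$\delta$)$\Rightarrow$(H3,$\delta$), (H3,$\delta$)$\Rightarrow$(H2,$4\delta$), (H1,$\delta$)$\Rightarrow$(H3,$4\delta$), and (H3,$\delta$)$\Rightarrow$(H1,$8\delta$).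
   Context: An ordered abelian group is an abelian group with a total order compatible with addition; $\Lambda_{\mathbb{Q}}$ is its ordered divisible hull containing $\Lambda$. A $\Lambda$-metric space is a set $X$ with $d:X\times X\to\Lambda$ satisfying $d\geqslant0$, $d(x,y)=0\iff x=y$, symmetry and the triangle inequality. Gromov product: $(x\cdot y)_v=\tfrac12(d(x,v)+d(y,v)-d(x,y))\in\Lambda_{\mathbb{Q}}$. $X$ is $\delta$-hyperbolic if $(x\cdot y)_v\geqslant\min\{(x\cdot z)_v,(z\cdot y)_v\}-\delta$ for all $v,x,y,z\in X$. A segment $[p,q]$ is the image of an isometric map $\alpha:\{t\in\Lambda:a\leqslant t\leqslant b\}\to X$ (metric $|s-t|$) with $\alpha(a)=p,\alpha(b)=q$; $X$ is geodesic if any two points are endpoints of a segment. A geodesic triangle $\Delta(x,y,z)$ is a union of chosen segments $[x,y],[y,z],[x,z]$. It is $\delta$-thin if for each vertex, say $x$ (and likewise for $y$ and $z$), and all $u\in[x,y]$, $v\in[x,z]$ with $d(x,u)=d(x,v)\leqslant(y\cdot z)_x$, one has $d(u,v)\leqslant\delta$ (equivalently: points identified by the natural map of the triangle onto its comparison $\Lambda$-tripod are at distance $\leqslant\delta$). *)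

theory Defs
  imports Main
begin

text \<open>Lambda is modelled by a type 'a of class linordered_ab_group_add (ordered abelian group);
the Lambda-metric space X is the whole type 'b with distance d :: 'b => 'b => 'a.\<close>

definition lambda_metric :: "('b \<Rightarrow> 'b \<Rightarrow> 'a::linordered_ab_group_add) \<Rightarrow> bool" where
  "lambda_metric d \<longleftrightarrow>
     (\<forall>x y. d x y \<ge> 0) \<and> (\<forall>x y. d x y = 0 \<longleftrightarrow> x = y) \<and> (\<forall>x y. d x y = d y x) \<and>
     (\<forall>x y z. d x z \<le> d x y + d y z)"

text \<open>The Gromov product, under the standing hypothesis that it lies in Lambda:
the unique g in Lambda with 2g = d(x,v) + d(y,v) - d(x,y).\<close>
definition gromov :: "('b \<Rightarrow> 'b \<Rightarrow> 'a::linordered_ab_group_add) \<Rightarrow> 'b \<Rightarrow> 'b \<Rightarrow> 'b \<Rightarrow> 'a" where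
  "gromov d x y v = (THE g. g + g = d x v + d y v - d x y)"

definition gromov_in_lambda :: "('b \<Rightarrow> 'b \<Rightarrow> 'a::linordered_ab_group_add) \<Rightarrow> bool" where
  "gromov_in_lambda d \<longleftrightarrow> (\<forall>x y v. \<exists>g. g + g = d x v + d y v - d x y)"

definition hyperbolic :: "('b \<Rightarrow> 'b \<Rightarrow> 'a::linordered_ab_group_add) \<Rightarrow> 'a \<Rightarrow> bool" where
  "hyperbolic d \<delta> \<longleftrightarrow>
     (\<forall>v x y z. gromov d x y v \<ge> min (gromov d x z v) (gromov d z y v) - \<delta>)"

definition is_segment :: "('b \<Rightarrow> 'b \<Rightarrow> 'a::linordered_ab_group_add) \<Rightarrow> 'b set \<Rightarrow> 'b \<Rightarrow> 'b \<Rightarrow> bool" where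
  "is_segment d S p q \<longleftrightarrow>
     (\<exists>(\<alpha>::'a \<Rightarrow> 'b) a b. a \<le> b \<and>
        (\<forall>s\<in>{a..b}. \<forall>t\<in>{a..b}. d (\<alpha> s) (\<alpha> t) = max (s - t) (t - s)) \<and>
        \<alpha> a = p \<and> \<alpha> b = q \<and> S = \<alpha> ` {a..b})"

definition geodesic :: "('b \<Rightarrow> 'b \<Rightarrow> 'a::linordered_ab_group_add) \<Rightarrow> bool" where
  "geodesic d \<longleftrightarrow> (\<forall>p q. \<exists>S. is_segment d S p q)"

definition thin_triangle :: "('b \<Rightarrow> 'b \<Rightarrow> 'a::linordered_ab_group_add) \<Rightarrow> 'a \<Rightarrow>
    'b \<Rightarrow> 'b \<Rightarrow> 'b \<Rightarrow> 'b set \<Rightarrow> 'b set \<Rightarrow> 'b set \<Rightarrow> bool" where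
  "thin_triangle d \<delta> x y z Sxy Syz Sxz \<longleftrightarrow>
     (\<forall>u\<in>Sxy. \<forall>v\<in>Sxz. d x u = d x v \<and> d x u \<le> gromov d y z x \<longrightarrow> d u v \<le> \<delta>) \<and>
     (\<forall>u\<in>Sxy. \<forall>v\<in>Syz. d y u = d y v \<and> d y u \<le> gromov d x z y \<longrightarrow> d u v \<le> \<delta>) \<and>
     (\<forall>u\<in>Sxz. \<forall>v\<in>Syz. d z u = d z v \<and> d z u \<le> gromov d x y z \<longrightarrow> d u v \<le> \<delta>)"

definition H1 :: "('b \<Rightarrow> 'b \<Rightarrow> 'a::linordered_ab_group_add) \<Rightarrow> 'a \<Rightarrow> bool" where
  "H1 d \<delta> \<longleftrightarrow> hyperbolic d \<delta>"

definition H2 :: "('b \<Rightarrow> 'b \<Rightarrow> 'a::linordered_ab_group_add) \<Rightarrow> 'a \<Rightarrow> bool" where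
  "H2 d \<delta> \<longleftrightarrow> (\<forall>x y z Sxy Syz Sxz.
     is_segment d Sxy x y \<and> is_segment d Syz y z \<and> is_segment d Sxz x z \<longrightarrow>
     thin_triangle d \<delta> x y z Sxy Syz Sxz)"

definition H3 :: "('b \<Rightarrow> 'b \<Rightarrow> 'a::linordered_ab_group_add) \<Rightarrow> 'a \<Rightarrow> bool" where
  "H3 d \<delta> \<longleftrightarrow> (\<forall>x y z Sxy Syz Sxz.
     is_segment d Sxy x y \<and> is_segment d Syz y z \<and> is_segment d Sxz x z \<longrightarrow>
     (\<forall>u\<in>Sxy. \<exists>w\<in>Sxz \<union> Syz. d u w \<le> \<delta>))"

end

(*
  Everything reduces to comparing a triangle with its comparison tripod. Points on a segment
  are determined by their distance from an endpoint, and Gromov products of such points with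
  the endpoints are those distances, so hyperbolicity bounds the Gromov product of two
  tripod-identified points from below, hence their distance from above (H1 \<Longrightarrow> H2). Conversely,
  the point of [x,y] facing v in the triangle (x,y,v) is within (x\<cdot>y)_v + \<delta> of v, and a nearby
  point of the other two sides of (x,y,z) bounds (x\<cdot>z)_v or (y\<cdot>z)_v (H2 \<Longrightarrow> H1). From H3 the two
  tripod-identified points are each close to the other sides; only when both land on the third
  side is a further estimate along that side needed (H3 \<Longrightarrow> H2).
*)

theory Submission
  imports Defs
begin

lemma le_of_double_le:
  fixes g h :: "'a::linordered_ab_group_add"
  assumes "g + g \<le> h + h"
  shows "g \<le> h"
  using assms by (metis add_strict_mono not_le)

lemma eq_of_double_eq:
  fixes g h :: "'a::linordered_ab_group_add"
  assumes "g + g = h + h"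
  shows "g = h"
  using assms by (metis le_of_double_le order_refl antisym)

section \<open>Segments\<close>

lemma max_diff_eq:
  fixes a s :: "'a::linordered_ab_group_add"
  assumes "a \<le> s"
  shows "max (s - a) (a - s) = s - a" "max (a - s) (s - a) = s - a"
proof -
  have "a - s \<le> s - a"
    using assms by (meson order_trans diff_ge_0_iff_ge diff_le_0_iff_le)
  then show "max (s - a) (a - s) = s - a" "max (a - s) (s - a) = s - a"
    by (auto simp: max_def)
qed

lemma is_segment_commute:
  assumes "is_segment d S p q"
  shows "is_segment d S q p"
proof -
  from assms obtain \<alpha> a b where ab: "a \<le> b"
    and iso: "\<forall>s\<in>{a..b}. \<forall>t\<in>{a..b}. d (\<alpha> s) (\<alpha> t) = max (s - t) (t - s)"
    and ends: "\<alpha> a = p" "\<alpha> b = q" and S: "S = \<alpha> ` {a..b}"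
    unfolding is_segment_def by blast
  define r where "r t = a + b - t" for t
  have r_mem: "r t \<in> {a..b}" if "t \<in> {a..b}" for t
    using that by (auto simp: r_def algebra_simps le_diff_eq diff_le_eq)
  have "r (r t) = t" for t
    by (simp add: r_def)
  then have "r ` {a..b} = {a..b}"
    using r_mem by (metis image_subsetI subset_antisym image_eqI subsetI)
  then have "(\<alpha> \<circ> r) ` {a..b} = S"
    by (metis S image_comp)
  moreover have "\<forall>s\<in>{a..b}. \<forall>t\<in>{a..b}. d ((\<alpha> \<circ> r) s) ((\<alpha> \<circ> r) t) = max (s - t) (t - s)"
    using iso r_mem by (simp add: r_def algebra_simps max.commute)
  moreover have "(\<alpha> \<circ> r) a = q" "(\<alpha> \<circ> r) b = p"
    using ends by (simp_all add: r_def)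
  ultimately show ?thesis
    unfolding is_segment_def using ab by metis
qed

lemma is_segmentE:
  assumes "is_segment d S p q"
  obtains \<alpha> a b where "a \<le> b" "S = \<alpha> ` {a..b}"
    "\<And>s t. s \<in> {a..b} \<Longrightarrow> t \<in> {a..b} \<Longrightarrow> d (\<alpha> s) (\<alpha> t) = max (s - t) (t - s)"
    "\<And>s. s \<in> {a..b} \<Longrightarrow> d p (\<alpha> s) = s - a"
    "\<And>s. s \<in> {a..b} \<Longrightarrow> d (\<alpha> s) q = b - s" "d p q = b - a"
proof -
  from assms obtain \<alpha> a b where ab: "a \<le> b"
    and iso: "\<forall>s\<in>{a..b}. \<forall>t\<in>{a..b}. d (\<alpha> s) (\<alpha> t) = max (s - t) (t - s)"
    and ends: "\<alpha> a = p" "\<alpha> b = q" and S: "S = \<alpha> ` {a..b}"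
    unfolding is_segment_def by blast
  have "d p (\<alpha> s) = s - a" if "s \<in> {a..b}" for s
    using iso ab that ends max_diff_eq[of a s] by auto
  moreover have "d (\<alpha> s) q = b - s" if "s \<in> {a..b}" for s
    using iso ab that ends max_diff_eq[of s b] by auto
  moreover have "d p q = b - a"
    using calculation(1)[of b] ab ends by simp
  ultimately show thesis
    using that ab S iso by blast
qed

lemma segment_dist:
  assumes "is_segment d S p q" "u \<in> S" "v \<in> S"
  shows "d u v = max (d p u - d p v) (d p v - d p u)"
proof -
  obtain \<alpha> a b where S: "S = \<alpha> ` {a..b}"
    and iso: "\<And>s t. s \<in> {a..b} \<Longrightarrow> t \<in> {a..b} \<Longrightarrow> d (\<alpha> s) (\<alpha> t) = max (s - t) (t - s)"
    and dp: "\<And>s. s \<in> {a..b} \<Longrightarrow> d p (\<alpha> s) = s - a"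
    using is_segmentE[OF assms(1)] by metis
  from assms(2,3) S obtain s t where "s \<in> {a..b}" "t \<in> {a..b}" "u = \<alpha> s" "v = \<alpha> t"
    by blast
  then show ?thesis
    using iso dp by simp
qed

lemma segment_dist_add:
  assumes "is_segment d S p q" "u \<in> S"
  shows "d p u + d u q = d p q"
proof -
  obtain \<alpha> a b where S: "S = \<alpha> ` {a..b}" and pq: "d p q = b - a"
    and dp: "\<And>s. s \<in> {a..b} \<Longrightarrow> d p (\<alpha> s) = s - a"
    and dq: "\<And>s. s \<in> {a..b} \<Longrightarrow> d (\<alpha> s) q = b - s"
    using is_segmentE[OF assms(1)] by metis
  from assms(2) S obtain s where s: "s \<in> {a..b}" "u = \<alpha> s"
    by blast
  have "(s - a) + (b - s) = b - a"
    by (simp add: algebra_simps)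
  then show ?thesis
    using dp[OF s(1)] dq[OF s(1)] pq s(2) by simp
qed

lemma segment_point_at_dist:
  assumes "is_segment d S p q" "0 \<le> t" "t \<le> d p q"
  obtains u where "u \<in> S" "d p u = t"
proof -
  obtain \<alpha> a b where S: "S = \<alpha> ` {a..b}" and pq: "d p q = b - a"
    and dp: "\<And>s. s \<in> {a..b} \<Longrightarrow> d p (\<alpha> s) = s - a"
    using is_segmentE[OF assms(1)] by metis
  have "a + t \<in> {a..b}"
    using assms(2,3) pq by (auto simp: algebra_simps)
  then show thesis
    using that[of "\<alpha> (a + t)"] S dp by simp
qed

lemma segment_dist_le:
  fixes d :: "'b \<Rightarrow> 'b \<Rightarrow> 'a::linordered_ab_group_add"
  assumes "is_segment d S p q" "w \<in> S" "w' \<in> S"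
    and "d p w \<le> d p w' + e" "d p w' \<le> d p w + e"
  shows "d w w' \<le> e"
  using assms by (simp add: segment_dist[OF assms(1-3)] diff_le_eq add.commute)

lemma H2D:
  assumes "H2 d \<delta>" "is_segment d Sxy x y" "is_segment d Syz y z" "is_segment d Sxz x z"
    and "u \<in> Sxy" "v \<in> Sxz" "d x u = d x v" "d x u \<le> gromov d y z x"
  shows "d u v \<le> \<delta>"
  using assms unfolding H2_def thin_triangle_def by blast

text \<open>Thinness at one vertex of every triangle suffices: relabelling the triangle moves
  any vertex into the first position.\<close>

lemma H2I:
  assumes vertex: "\<And>x y z Sxy Syz Sxz u v. is_segment d Sxy x y \<Longrightarrow> is_segment d Syz y z \<Longrightarrow>
      is_segment d Sxz x z \<Longrightarrow> u \<in> Sxy \<Longrightarrow> v \<in> Sxz \<Longrightarrow> d x u = d x v \<Longrightarrow>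
      d x u \<le> gromov d y z x \<Longrightarrow> d u v \<le> \<delta>"
  shows "H2 d \<delta>"
  unfolding H2_def thin_triangle_def
proof (intro allI impI conjI ballI)
  fix x y z Sxy Syz Sxz
  assume "is_segment d Sxy x y \<and> is_segment d Syz y z \<and> is_segment d Sxz x z"
  then have xy: "is_segment d Sxy x y" and yz: "is_segment d Syz y z" and xz: "is_segment d Sxz x z"
    by simp_all
  show "d u v \<le> \<delta>" if "u \<in> Sxy" "v \<in> Sxz" "d x u = d x v \<and> d x u \<le> gromov d y z x" for u v
    using vertex[OF xy yz xz] that by blast
  show "d u v \<le> \<delta>" if "u \<in> Sxy" "v \<in> Syz" "d y u = d y v \<and> d y u \<le> gromov d x z y" for u v
    using vertex[OF is_segment_commute[OF xy] xz yz] that by blast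
  show "d u v \<le> \<delta>" if "u \<in> Sxz" "v \<in> Syz" "d z u = d z v \<and> d z u \<le> gromov d x y z" for u v
    using vertex[OF is_segment_commute[OF xz] xy is_segment_commute[OF yz]] that by blast
qed

lemma H3D:
  assumes "H3 d \<delta>" "is_segment d Sxy x y" "is_segment d Syz y z" "is_segment d Sxz x z" "u \<in> Sxy"
  obtains w where "w \<in> Sxz \<union> Syz" "d u w \<le> \<delta>"
  using assms unfolding H3_def by blast

section \<open>Gromov products in a \<open>\<Lambda>\<close>-metric space\<close>

locale lambda_metric_space =
  fixes d :: "'b \<Rightarrow> 'b \<Rightarrow> 'a::linordered_ab_group_add"
  assumes metric: "lambda_metric d"
    and gromov_exists: "gromov_in_lambda d"
begin

lemma dist_nonneg: "0 \<le> d x y"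
  using metric unfolding lambda_metric_def by blast

lemma dist_commute: "d x y = d y x"
  using metric unfolding lambda_metric_def by blast

lemma dist_triangle: "d x z \<le> d x y + d y z"
  using metric unfolding lambda_metric_def by blast

lemma gromov_double: "gromov d x y v + gromov d x y v = d x v + d y v - d x y"
proof -
  from gromov_exists obtain g where g: "g + g = d x v + d y v - d x y"
    unfolding gromov_in_lambda_def by blast
  then have "\<exists>!g. g + g = d x v + d y v - d x y"
    using eq_of_double_eq by metis
  then show ?thesis
    unfolding gromov_def by (rule theI')
qed

lemma gromov_commute: "gromov d x y v = gromov d y x v"
  unfolding gromov_def by (simp add: dist_commute[of x y] add.commute)

lemma gromov_nonneg: "0 \<le> gromov d x y v"
proof (rule le_of_double_le)
  have "d x y \<le> d x v + d v y"
    by (rule dist_triangle)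
  then show "0 + 0 \<le> gromov d x y v + gromov d x y v"
    unfolding gromov_double by (simp add: dist_commute[of v y])
qed

lemma gromov_le_dist: "gromov d y z x \<le> d x z"
proof (rule le_of_double_le)
  have "d y x \<le> d y z + d z x"
    by (rule dist_triangle)
  then show "gromov d y z x + gromov d y z x \<le> d x z + d x z"
    unfolding gromov_double by (simp add: dist_commute[of z x] algebra_simps)
qed

lemma gromov_add_gromov: "gromov d y z x + gromov d x z y = d x y"
proof (rule eq_of_double_eq)
  have "(gromov d y z x + gromov d x z y) + (gromov d y z x + gromov d x z y)
      = (gromov d y z x + gromov d y z x) + (gromov d x z y + gromov d x z y)"
    by (simp add: algebra_simps)
  also have "\<dots> = d x y + d x y"
    unfolding gromov_double
    by (simp add: dist_commute[of y x] dist_commute[of z x] dist_commute[of z y] algebra_simps)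
  finally show "(gromov d y z x + gromov d x z y) + (gromov d y z x + gromov d x z y) = d x y + d x y" .
qed

lemma gromov_le_dist_segment:
  assumes "is_segment d S x z" "w \<in> S"
  shows "gromov d x z v \<le> d v w"
proof (rule le_of_double_le)
  have "d x v + d z v \<le> (d x w + d w v) + (d z w + d w v)"
    using add_mono[OF dist_triangle dist_triangle] .
  then show "gromov d x z v + gromov d x z v \<le> d v w + d v w"
    unfolding gromov_double using segment_dist_add[OF assms]
    by (simp add: dist_commute[of w z] dist_commute[of w v] algebra_simps)
qed

lemma gromov_segment_point:
  assumes "is_segment d S x y" "u \<in> S"
  shows "gromov d u y x = d x u"
proof (rule eq_of_double_eq)
  show "gromov d u y x + gromov d u y x = d x u + d x u"
    unfolding gromov_double using segment_dist_add[OF assms]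
    by (simp add: dist_commute[of u x] dist_commute[of y x] algebra_simps)
qed

lemma segment_point_close:
  assumes "is_segment d S p q" "a \<in> S" "w \<in> S"
    and "d p c = d p a" "d c w \<le> e"
  shows "d a w \<le> e"
proof (rule segment_dist_le[OF assms(1-3)])
  have "d p w \<le> d p c + d c w"
    by (rule dist_triangle)
  then show "d p w \<le> d p a + e"
    using assms(4,5) by (metis add_left_mono order_trans)
  have "d p c \<le> d p w + d w c"
    by (rule dist_triangle)
  then show "d p a \<le> d p w + e"
    using assms(4,5) dist_commute[of w c] by (metis add_left_mono order_trans)
qed

text \<open>Measured from \<open>z\<close>, both \<open>w\<close> and \<open>w'\<close> lie within \<open>\<delta>\<close> of \<open>d x z - t\<close>; the upper
  bound for \<open>w\<close> is where \<open>t \<le> (y\<cdot>z)\<^sub>x\<close> enters.\<close>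

lemma opposite_side_points_close:
  assumes Sxy: "is_segment d Sxy x y" and Sxz: "is_segment d Sxz x z" and Syz: "is_segment d Syz y z"
    and u: "u \<in> Sxy" and v: "v \<in> Sxz" and w: "w \<in> Syz" and w': "w' \<in> Syz"
    and tu: "d x u = t" and tv: "d x v = t" and t: "t \<le> gromov d y z x"
    and uw: "d u w \<le> \<delta>" and vw': "d v w' \<le> \<delta>"
  shows "d w w' \<le> \<delta> + \<delta>"
proof (rule segment_dist_le[OF is_segment_commute[OF Syz] w w'])
  have xy: "d x y = t + d y u" and xz: "d x z = t + d z v" and yz: "d y z = d y w + d z w"
    using segment_dist_add[OF Sxy u] segment_dist_add[OF Sxz v] segment_dist_add[OF Syz w] tu tv
    by (simp_all add: dist_commute[of u y] dist_commute[of v z] dist_commute[of w z])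
  have "d z w' + d x z \<le> (d z v + d v w') + ((d x u + d u w) + d w z)"
    using add_mono[OF dist_triangle order_trans[OF dist_triangle add_right_mono[OF dist_triangle]]] .
  also have "\<dots> \<le> (d z v + \<delta>) + ((d x u + \<delta>) + d w z)"
    using uw vw' by (intro add_mono order_refl)
  also have "\<dots> = d z w + (\<delta> + \<delta>) + d x z"
    using tu xz by (simp add: dist_commute[of w z] algebra_simps)
  finally show "d z w' \<le> d z w + (\<delta> + \<delta>)"
    by simp
  have tt: "t + t \<le> d x y + d x z - d y z"
    using add_mono[OF t t] unfolding gromov_double by (simp add: dist_commute[of y x] dist_commute[of z x])
  have "d z w + d y u + d z v + (t + t)
      \<le> d z w + (d y w + d w u) + (d z w' + d w' v) + (d x y + d x z - d y z)"
    by (intro add_mono dist_triangle order_refl tt)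
  also have "\<dots> \<le> d z w + (d y w + \<delta>) + (d z w' + \<delta>) + (d x y + d x z - d y z)"
    using uw vw' by (intro add_mono order_refl) (simp_all add: dist_commute[of w u] dist_commute[of w' v])
  also have "\<dots> = d z w' + (\<delta> + \<delta>) + d y u + d z v + (t + t)"
    unfolding xy xz yz by (simp add: algebra_simps)
  finally show "d z w \<le> d z w' + (\<delta> + \<delta>)"
    by simp
qed

section \<open>Thin triangles and hyperbolicity\<close>

text \<open>\<open>(u\<cdot>v)\<^sub>x = t - d(u,v)/2\<close>, while hyperbolicity applied through \<open>z\<close> and then \<open>y\<close>
  gives \<open>(u\<cdot>v)\<^sub>x \<ge> t - 2\<delta>\<close>.\<close>

lemma hyperbolic_vertex_dist_le:
  assumes hyp: "hyperbolic d \<delta>" and "0 \<le> \<delta>"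
    and Sxy: "is_segment d Sxy x y" and Sxz: "is_segment d Sxz x z" and u: "u \<in> Sxy" and v: "v \<in> Sxz"
    and uv_eq: "d x u = d x v" and uv_le: "d x u \<le> gromov d y z x"
  shows "d u v \<le> \<delta> + \<delta> + \<delta> + \<delta>"
proof -
  define t where "t = d x u"
  have tu: "d x u = t" and tv: "d x v = t" and t: "t \<le> gromov d y z x"
    using uv_eq uv_le by (simp_all add: t_def)
  have uy: "gromov d u y x = t" and zv: "gromov d z v x = t"
    using gromov_segment_point[OF Sxy u] gromov_segment_point[OF Sxz v] tu tv gromov_commute[of z v x]
    by simp_all
  have "min (gromov d y z x) (gromov d z v x) - \<delta> \<le> gromov d y v x"
    using hyp unfolding hyperbolic_def by blast
  then have yv: "t - \<delta> \<le> gromov d y v x"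
    using t zv by (simp add: min.absorb2)
  have "min (gromov d u y x) (gromov d y v x) - \<delta> \<le> gromov d u v x"
    using hyp unfolding hyperbolic_def by blast
  moreover have "t - \<delta> \<le> min (gromov d u y x) (gromov d y v x)"
    using uy yv \<open>0 \<le> \<delta>\<close> by simp
  ultimately have uv: "t - \<delta> - \<delta> \<le> gromov d u v x"
    by (meson diff_right_mono order_trans)
  have "(t - \<delta> - \<delta>) + (t - \<delta> - \<delta>) \<le> t + t - d u v"
    using add_mono[OF uv uv] unfolding gromov_double using tu tv by (simp add: dist_commute[of _ x])
  then show ?thesis
    by (simp add: algebra_simps)
qed

lemma H1_imp_H2:
  assumes "H1 d \<delta>" "0 \<le> \<delta>"
  shows "H2 d (\<delta> + \<delta> + \<delta> + \<delta>)"
  using assms hyperbolic_vertex_dist_le unfolding H1_def by (intro H2I)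

lemma H2_imp_H3:
  assumes H: "H2 d \<delta>"
  shows "H3 d \<delta>"
  unfolding H3_def
proof (intro allI impI ballI)
  fix x y z Sxy Syz Sxz u
  assume "is_segment d Sxy x y \<and> is_segment d Syz y z \<and> is_segment d Sxz x z" and u: "u \<in> Sxy"
  then have xy: "is_segment d Sxy x y" and yz: "is_segment d Syz y z" and xz: "is_segment d Sxz x z"
    by simp_all
  show "\<exists>w\<in>Sxz \<union> Syz. d u w \<le> \<delta>"
  proof (cases "d x u \<le> gromov d y z x")
    case True
    with gromov_le_dist order_trans obtain v where v: "v \<in> Sxz" "d x v = d x u"
      using segment_point_at_dist[OF xz dist_nonneg] by metis
    have "d u v \<le> \<delta>"
      using H2D[OF H xy yz xz u v(1)] v(2) True by simp
    with v(1) show ?thesis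
      by blast
  next
    case False
    have sum: "d y u + d x u = gromov d x z y + gromov d y z x"
      using segment_dist_add[OF xy u] gromov_add_gromov[of y z x] by (simp add: dist_commute[of u y] add.commute)
    have yu: "d y u \<le> gromov d x z y"
    proof (rule ccontr)
      assume "\<not> ?thesis"
      with False have "gromov d x z y + gromov d y z x < d y u + d x u"
        by (intro add_strict_mono) simp_all
      with sum show False
        by simp
    qed
    with gromov_le_dist order_trans obtain v where v: "v \<in> Syz" "d y v = d y u"
      using segment_point_at_dist[OF yz dist_nonneg] by metis
    have "d u v \<le> \<delta>"
      using H2D[OF H is_segment_commute[OF xy] xz yz u v(1)] v(2) yu by simp
    with v(1) show ?thesis
      by blast
  qed
qed

text \<open>In a thin triangle with vertices \<open>x, y, v\<close>, the point of \<open>[x, y]\<close> at distance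
  \<open>(y\<cdot>v)\<^sub>x\<close> from \<open>x\<close> is \<open>\<delta>\<close>-close to the point of \<open>[x, v]\<close> at distance \<open>(x\<cdot>y)\<^sub>v\<close> from \<open>v\<close>.\<close>

lemma H2_segment_point_near:
  assumes "geodesic d" and H: "H2 d \<delta>" and xy: "is_segment d Sxy x y"
  obtains p where "p \<in> Sxy" "d v p \<le> gromov d x y v + \<delta>"
proof -
  obtain Sxv Syv where xv: "is_segment d Sxv x v" and yv: "is_segment d Syv y v"
    using \<open>geodesic d\<close> unfolding geodesic_def by blast
  define g where "g = gromov d y v x"
  have "g \<le> d x y" "g \<le> d x v"
    using gromov_le_dist[of v y x] gromov_le_dist[of y v x] by (simp_all add: g_def gromov_commute[of y v])
  then obtain p q where p: "p \<in> Sxy" "d x p = g" and q: "q \<in> Sxv" "d x q = g"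
    using segment_point_at_dist[OF xy] segment_point_at_dist[OF xv] gromov_nonneg
    unfolding g_def by metis
  have pq: "d p q \<le> \<delta>"
    using H2D[OF H xy yv xv p(1) q(1)] p(2) q(2) by (simp add: g_def)
  have "g + d q v = g + gromov d x y v"
    using segment_dist_add[OF xv q(1)] gromov_add_gromov[of v y x] q(2)
    by (simp add: g_def gromov_commute[of y v])
  then have qv: "d v q = gromov d x y v"
    by (simp add: dist_commute[of q v])
  have "d v p \<le> d v q + d q p"
    by (rule dist_triangle)
  also have "\<dots> \<le> gromov d x y v + \<delta>"
    using qv pq by (simp add: dist_commute[of q p])
  finally show thesis
    using that p(1) by blast
qed

lemma H2_imp_H1:
  assumes "geodesic d" and H: "H2 d \<delta>"
  shows "H1 d (\<delta> + \<delta>)"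
  unfolding H1_def hyperbolic_def
proof (intro allI)
  fix v x y z
  obtain Sxy Syz Sxz where xy: "is_segment d Sxy x y" and yz: "is_segment d Syz y z"
    and xz: "is_segment d Sxz x z"
    using \<open>geodesic d\<close> unfolding geodesic_def by metis
  obtain p where p: "p \<in> Sxy" "d v p \<le> gromov d x y v + \<delta>"
    using H2_segment_point_near[OF \<open>geodesic d\<close> H xy] by blast
  obtain w where w: "w \<in> Sxz \<union> Syz" "d p w \<le> \<delta>"
    using H3D[OF H2_imp_H3[OF H] xy yz xz p(1)] by blast
  have "min (gromov d x z v) (gromov d z y v) \<le> d v w"
    using w(1)
  proof
    assume "w \<in> Sxz"
    then show ?thesis
      using gromov_le_dist_segment[OF xz] by (simp add: min.coboundedI1)
  next
    assume "w \<in> Syz"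
    then show ?thesis
      using gromov_le_dist_segment[OF yz] by (simp add: min.coboundedI2 gromov_commute[of z y])
  qed
  also have "d v w \<le> d v p + d p w"
    by (rule dist_triangle)
  also have "\<dots> \<le> gromov d x y v + (\<delta> + \<delta>)"
    using add_mono[OF p(2) w(2)] by (simp add: add.assoc)
  finally show "min (gromov d x z v) (gromov d z y v) - (\<delta> + \<delta>) \<le> gromov d x y v"
    by (simp add: diff_le_eq)
qed

lemma H3_vertex_dist_le:
  assumes H: "H3 d \<delta>" and "0 \<le> \<delta>"
    and xy: "is_segment d Sxy x y" and yz: "is_segment d Syz y z" and xz: "is_segment d Sxz x z"
    and u: "u \<in> Sxy" and v: "v \<in> Sxz" and uv_eq: "d x u = d x v" and uv_le: "d x u \<le> gromov d y z x"
  shows "d u v \<le> \<delta> + \<delta> + \<delta> + \<delta>"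
proof -
  obtain w where w: "w \<in> Sxz \<union> Syz" and uw: "d u w \<le> \<delta>"
    using H3D[OF H xy yz xz u] .
  obtain w' where w': "w' \<in> Sxy \<union> Syz" and vw': "d v w' \<le> \<delta>"
    using H3D[OF H xz is_segment_commute[OF yz] xy v] by blast
  have two_le_four: "\<delta> + \<delta> \<le> \<delta> + \<delta> + \<delta> + \<delta>"
    using \<open>0 \<le> \<delta>\<close> by (simp add: add.assoc add_increasing2)
  consider "w \<in> Sxz" | "w' \<in> Sxy" | "w \<in> Syz" "w' \<in> Syz"
    using w w' by blast
  then show ?thesis
  proof cases
    case 1
    have "d v w \<le> \<delta>"
      by (rule segment_point_close[OF xz v 1 uv_eq uw])
    have "d u v \<le> d u w + d w v"
      by (rule dist_triangle)
    also have "\<dots> \<le> \<delta> + \<delta>"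
      using uw \<open>d v w \<le> \<delta>\<close> by (simp add: add_mono dist_commute[of w v])
    finally have "d u v \<le> \<delta> + \<delta>" .
    then show ?thesis
      using two_le_four by (rule order_trans)
  next
    case 2
    have "d u w' \<le> \<delta>"
      by (rule segment_point_close[OF xy u 2 uv_eq[symmetric] vw'])
    have "d u v \<le> d u w' + d w' v"
      by (rule dist_triangle)
    also have "\<dots> \<le> \<delta> + \<delta>"
      using \<open>d u w' \<le> \<delta>\<close> vw' by (simp add: add_mono dist_commute[of w' v])
    finally have "d u v \<le> \<delta> + \<delta>" .
    then show ?thesis
      using two_le_four by (rule order_trans)
  next
    case 3
    have "d w w' \<le> \<delta> + \<delta>"
      using opposite_side_points_close[OF xy xz yz u v 3 refl uv_eq[symmetric] uv_le uw vw'] .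
    have "d u v \<le> d u w + (d w w' + d w' v)"
      using order_trans[OF dist_triangle add_left_mono[OF dist_triangle]] .
    also have "\<dots> \<le> \<delta> + ((\<delta> + \<delta>) + \<delta>)"
      using uw \<open>d w w' \<le> \<delta> + \<delta>\<close> vw' by (simp add: add_mono dist_commute[of w' v])
    finally show ?thesis
      by (simp add: add.assoc)
  qed
qed

lemma H3_imp_H2:
  assumes "H3 d \<delta>" "0 \<le> \<delta>"
  shows "H2 d (\<delta> + \<delta> + \<delta> + \<delta>)"
  using assms H3_vertex_dist_le by (intro H2I)

end

theorem proposition1p2p9:
  fixes d :: "'b \<Rightarrow> 'b \<Rightarrow> 'a::linordered_ab_group_add" and \<delta> :: 'a
  assumes "lambda_metric d" and "geodesic d" and "gromov_in_lambda d" and "\<delta> \<ge> 0"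
  shows "(H1 d \<delta> \<longrightarrow> H2 d (\<delta> + \<delta> + \<delta> + \<delta>)) \<and>
         (H2 d \<delta> \<longrightarrow> H1 d (\<delta> + \<delta>)) \<and>
         (H2 d \<delta> \<longrightarrow> H3 d \<delta>) \<and>
         (H3 d \<delta> \<longrightarrow> H2 d (\<delta> + \<delta> + \<delta> + \<delta>)) \<and>
         (H1 d \<delta> \<longrightarrow> H3 d (\<delta> + \<delta> + \<delta> + \<delta>)) \<and>
         (H3 d \<delta> \<longrightarrow> H1 d (\<delta> + \<delta> + \<delta> + \<delta> + \<delta> + \<delta> + \<delta> + \<delta>))"
proof -
  interpret lambda_metric_space d
    using assms(1,3) by unfold_locales
  have "H3 d \<delta> \<Longrightarrow> H1 d ((\<delta> + \<delta> + \<delta> + \<delta>) + (\<delta> + \<delta> + \<delta> + \<delta>))"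
    using H2_imp_H1[OF assms(2) H3_imp_H2[OF _ assms(4)]] .
  then show ?thesis
    using H1_imp_H2 H2_imp_H1[OF assms(2)] H2_imp_H3 H3_imp_H2 assms(4)
    by (simp add: add.assoc)
qed

end
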